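(* Let $\Omega\subset\mathbb{R}^2$ be a convex polygon and $\Gamma$ a $C^2$ curve in $\Omega$ (the interface). Assume $\mathcal U_h$ is a quasi-uniform triangulation of $\Omega$ satisfying $Minac(\alpha)$, and $\mathcal F_h$ is the interface-fitted mesh generated from $\mathcal U_h$. Then there exist $N_\alpha\in\mathbb{R}$ and $\psi_\alpha\in(0,\pi)$ depending only on $\alpha$ such that every triangle $T\in\mathcal F_h$ satisfies $Maxac(\psi_\alpha)$ and every quadrilateral $K\in\mathcal F_h$ satisfies $RDP(N_\alpha,\psi_\alpha)$.
   Context: A triangle or quadrilateral satisfies $Minac(\alpha)$ if all its angles are $\ge\alpha$, and $Maxac(\psi)$ if all its angles are $\le\psi$; a mesh satisfies $Minac(\alpha)$ if all its elements do. A convex quadrilateral $K$ satisfies $RDP(N,\psi)$ if it can be divided along one of its diagonals $d_1$ into two triangles such that $|d_2|/|d_1|\le N$ ($d_2$ the other diagonal) and both triangles satisfy $Maxac(\psi)$. Interface-fitted mesh: for each triangle of $\mathcal U_h$ whose intersection with $\Gamma$ has positive length, $\Gamma$ crosses two of its edges; connecting successively the intersection points of $\Gamma$ with the edges of $\mathcal U_h$ by straight segments cuts each such triangle into a triangle and a quadrilateral; $\mathcal F_h$ consists of these pieces together with the triangles of $\mathcal U_h$ not crossed by $\Gamma$. *)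

theory Defs
  imports "HOL-Analysis.Analysis"
begin

type_synonym pt = "real^2"

definition ang :: "pt \<Rightarrow> pt \<Rightarrow> pt \<Rightarrow> real" where
  "ang a b c = arccos (((a - b) \<bullet> (c - b)) / (norm (a - b) * norm (c - b)))"

definition tri_angles :: "pt set \<Rightarrow> real set" where
  "tri_angles V = {ang a b c | a b c. V = {a, b, c} \<and> a \<noteq> b \<and> b \<noteq> c \<and> a \<noteq> c}"

definition nondeg_tri :: "pt set \<Rightarrow> bool" where
  "nondeg_tri V \<longleftrightarrow> card V = 3 \<and> \<not> collinear V"

definition Minac_tri :: "real \<Rightarrow> pt set \<Rightarrow> bool" where
  "Minac_tri \<alpha> V \<longleftrightarrow> (\<forall>\<theta>\<in>tri_angles V. \<alpha> \<le> \<theta>)"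

definition Maxac_tri :: "real \<Rightarrow> pt set \<Rightarrow> bool" where
  "Maxac_tri \<psi> V \<longleftrightarrow> (\<forall>\<theta>\<in>tri_angles V. \<theta> \<le> \<psi>)"

text \<open>Convex (non-degenerate) quadrilateral with vertices a,b,c,d in cyclic order.\<close>
definition convex_quad :: "pt \<Rightarrow> pt \<Rightarrow> pt \<Rightarrow> pt \<Rightarrow> bool" where
  "convex_quad a b c d \<longleftrightarrow>
     \<not> collinear {a, b, c} \<and> \<not> collinear {b, c, d} \<and> \<not> collinear {c, d, a} \<and> \<not> collinear {d, a, b} \<and>
     open_segment a c \<inter> open_segment b d \<noteq> {}"

text \<open>RDP(N,psi) for the convex quadrilateral a b c d (cyclic order): split along a
  diagonal d1 into two triangles satisfying Maxac(psi), with |d2|/|d1| <= N.\<close>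
definition RDP :: "real \<Rightarrow> real \<Rightarrow> pt \<Rightarrow> pt \<Rightarrow> pt \<Rightarrow> pt \<Rightarrow> bool" where
  "RDP N \<psi> a b c d \<longleftrightarrow> convex_quad a b c d \<and>
     ((dist b d / dist a c \<le> N \<and> Maxac_tri \<psi> {a, b, c} \<and> Maxac_tri \<psi> {a, c, d}) \<or>
      (dist a c / dist b d \<le> N \<and> Maxac_tri \<psi> {b, c, d} \<and> Maxac_tri \<psi> {b, d, a}))"

definition convex_polygon :: "pt set \<Rightarrow> bool" where
  "convex_polygon \<Omega> \<longleftrightarrow> (\<exists>P. finite P \<and> \<Omega> = convex hull P) \<and> interior \<Omega> \<noteq> {}"

definition triangulation :: "pt set \<Rightarrow> pt set set \<Rightarrow> bool" where
  "triangulation \<Omega> U \<longleftrightarrow> finite U \<and> (\<forall>V\<in>U. nondeg_tri V) \<and>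
     \<Union>((\<lambda>V. convex hull V) ` U) = \<Omega> \<and>
     (\<forall>V1\<in>U. \<forall>V2\<in>U. V1 \<noteq> V2 \<longrightarrow> convex hull V1 \<inter> convex hull V2 = convex hull (V1 \<inter> V2))"

definition Minac_mesh :: "real \<Rightarrow> pt set set \<Rightarrow> bool" where
  "Minac_mesh \<alpha> U \<longleftrightarrow> (\<forall>V\<in>U. Minac_tri \<alpha> V)"

definition C2_curve :: "(real \<Rightarrow> pt) \<Rightarrow> bool" where
  "C2_curve \<gamma> \<longleftrightarrow> (\<exists>\<gamma>1 \<gamma>2.
     (\<forall>t\<in>{0..1}. (\<gamma> has_vector_derivative \<gamma>1 t) (at t within {0..1}) \<and>
                  (\<gamma>1 has_vector_derivative \<gamma>2 t) (at t within {0..1})) \<and>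
     continuous_on {0..1} \<gamma>2)"

definition length_in :: "(real \<Rightarrow> pt) \<Rightarrow> pt set \<Rightarrow> real" where
  "length_in \<gamma> S = integral {t\<in>{0..1}. \<gamma> t \<in> S} (\<lambda>t. norm (vector_derivative \<gamma> (at t within {0..1})))"

definition crossed :: "(real \<Rightarrow> pt) \<Rightarrow> pt set \<Rightarrow> bool" where
  "crossed \<gamma> V \<longleftrightarrow> length_in \<gamma> (convex hull V) > 0"

text \<open>Standing assumption: Gamma crosses two edges of each crossed triangle (at interior
  points of the edges; these are the only points of Gamma on the triangle boundary).\<close>
definition cuts_two_edges :: "(real \<Rightarrow> pt) \<Rightarrow> pt set \<Rightarrow> bool" where
  "cuts_two_edges \<gamma> V \<longleftrightarrow> (\<exists>a b c p q. V = {a, b, c} \<and> p \<in> open_segment a b \<and> q \<in> open_segment a c \<and>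
      path_image \<gamma> \<inter> frontier (convex hull V) = {p, q})"

text \<open>Elements of the interface-fitted mesh, as vertex lists in cyclic order.\<close>
definition fitted_mesh :: "(real \<Rightarrow> pt) \<Rightarrow> pt set set \<Rightarrow> pt list set" where
  "fitted_mesh \<gamma> U =
     {[a, b, c] | a b c. {a, b, c} \<in> U \<and> \<not> crossed \<gamma> {a, b, c}} \<union>
     (\<Union>V\<in>{V\<in>U. crossed \<gamma> V}.
        \<Union>{{[a, p, q], [p, b, c, q]} | a b c p q. V = {a, b, c} \<and> p \<in> open_segment a b \<and>
             q \<in> open_segment a c \<and> path_image \<gamma> \<inter> frontier (convex hull V) = {p, q}})"

end

theory Submission
  imports Defs
begin

(* An element of the fitted mesh is a triangle of U, or the corner triangle a p q or the
   quadrilateral p b c q cut from a triangle a b c of U by a chord p q with p, q inside the edges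
   a b, a c.  The angles of a b c are at least alpha, so their sines are at least
   sigma = sin (min alpha (pi/2)).  By the law of sines an obtuse angle has the largest sine in
   its triangle; hence a triangle with one angle of sine at least s has no angle above
   pi - arcsin s.  The triangles a p q, p b c and b c q inherit an angle of a b c.  Of the two
   triangles p b q and q c p, the one whose apex is the endpoint of the shorter of a p, a q has
   there an angle of sine at least sigma/2, again by the law of sines.  Finally both diagonals of
   p b c q are at least sigma times one of |ab|, |ac| (the distance of a vertex from the opposite
   line) and at most |ab| + |ac|, and |ab|, |ac| agree up to the factor sigma; this bounds their
   ratio by (1 + sigma) / sigma^2. *)

definition cross2 :: "pt \<Rightarrow> pt \<Rightarrow> real" where
  "cross2 u v = u $ 1 * v $ 2 - u $ 2 * v $ 1"

lemma inner_vec2: "(u::pt) \<bullet> v = u $ 1 * v $ 1 + u $ 2 * v $ 2"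
  by (simp add: inner_vec_def sum_2)

lemma inner_sq_plus_cross2_sq: "(u \<bullet> v)\<^sup>2 + (cross2 u v)\<^sup>2 = (norm u)\<^sup>2 * (norm v)\<^sup>2"
  unfolding power2_norm_eq_inner inner_vec2 cross2_def by (simp add: power2_eq_square algebra_simps)

lemma abs_cross2_le: "\<bar>cross2 u v\<bar> \<le> norm u * norm v"
proof (rule power2_le_imp_le)
  show "\<bar>cross2 u v\<bar>\<^sup>2 \<le> (norm u * norm v)\<^sup>2"
    using inner_sq_plus_cross2_sq[of u v] zero_le_power2[of "u \<bullet> v"]
    unfolding power2_abs power_mult_distrib by linarith
qed simp

lemma cross2_diff_base: "cross2 (a - b) (c - b) = - cross2 (b - a) (c - a)"
  unfolding cross2_def by (simp add: algebra_simps)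

lemma collinear_iff_cross2_eq_0: "collinear {a, b, c} \<longleftrightarrow> cross2 (a - b) (c - b) = 0"
proof -
  define x where "x = (a - b) \<bullet> (c - b)"
  define n where "n = norm (a - b) * norm (c - b)"
  have "x\<^sup>2 + (cross2 (a - b) (c - b))\<^sup>2 = n\<^sup>2"
    unfolding x_def n_def power_mult_distrib by (rule inner_sq_plus_cross2_sq)
  then have "x\<^sup>2 = n\<^sup>2 \<longleftrightarrow> cross2 (a - b) (c - b) = 0" by auto
  moreover have "collinear {a, b, c} \<longleftrightarrow> \<bar>x\<bar> = n"
    unfolding x_def n_def by (simp add: collinear_3 norm_cauchy_schwarz_equal)
  moreover have "\<bar>x\<bar> = n \<longleftrightarrow> x\<^sup>2 = n\<^sup>2"
    using power2_eq_iff_nonneg[of "\<bar>x\<bar>" n] by (simp add: n_def)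
  ultimately show ?thesis by simp
qed

lemma ang_commute: "ang a b c = ang c b a"
  unfolding ang_def by (simp add: inner_commute mult.commute)

lemma abs_cos_ang_le_1: "\<bar>(a - b) \<bullet> (c - b) / (norm (a - b) * norm (c - b))\<bar> \<le> 1"
  using Cauchy_Schwarz_ineq2[of "a - b" "c - b"]
  by (cases "norm (a - b) * norm (c - b) = 0") (simp_all add: abs_mult divide_le_eq_1)

lemma ang_bounds: "0 \<le> ang a b c" "ang a b c \<le> pi"
  using abs_cos_ang_le_1[of a b c] unfolding ang_def abs_le_iff
  by (simp_all add: arccos_lbound arccos_ubound)

lemma ang_le_pi2_if_inner_nonneg: "0 \<le> (a - b) \<bullet> (c - b) \<Longrightarrow> ang a b c \<le> pi / 2"
  using abs_cos_ang_le_1[of a b c] unfolding ang_def abs_le_iff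
  by (intro arccos_le_pi2) auto

lemma sin_ang_mult_dist: "sin (ang a b c) * (dist a b * dist c b) = \<bar>cross2 (a - b) (c - b)\<bar>"
proof (cases "a = b \<or> c = b")
  case True
  then show ?thesis by (auto simp: cross2_def)
next
  case False
  define n where "n = dist a b * dist c b"
  define x where "x = (a - b) \<bullet> (c - b)"
  have n: "0 < n" using False by (simp add: n_def)
  have x: "\<bar>x\<bar> \<le> n" unfolding x_def n_def dist_norm by (rule Cauchy_Schwarz_ineq2)
  have "x\<^sup>2 + (cross2 (a - b) (c - b))\<^sup>2 = n\<^sup>2"
    unfolding x_def n_def dist_norm by (simp add: inner_sq_plus_cross2_sq power_mult_distrib)
  then have sq: "n\<^sup>2 - x\<^sup>2 = (cross2 (a - b) (c - b))\<^sup>2" by linarith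
  have "sin (ang a b c) = sqrt (1 - (x / n)\<^sup>2)"
    using x n unfolding ang_def x_def n_def dist_norm by (simp add: sin_arccos_abs)
  also have "\<dots> = sqrt (n\<^sup>2 - x\<^sup>2) / n"
    using n by (simp add: power_divide real_sqrt_divide field_simps)
  also have "\<dots> = \<bar>cross2 (a - b) (c - b)\<bar> / n"
    using sq by simp
  finally have "sin (ang a b c) * n = \<bar>cross2 (a - b) (c - b)\<bar>"
    using n by simp
  then show ?thesis by (simp add: n_def)
qed

lemma not_collinear_iff_sin_ang_pos:
  "\<not> collinear {a, b, c} \<longleftrightarrow> a \<noteq> b \<and> c \<noteq> b \<and> 0 < sin (ang a b c)"
proof (cases "a = b \<or> c = b")
  case False
  have "\<not> collinear {a, b, c} \<longleftrightarrow> \<bar>cross2 (a - b) (c - b)\<bar> \<noteq> 0"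
    by (simp add: collinear_iff_cross2_eq_0)
  also have "\<dots> \<longleftrightarrow> sin (ang a b c) \<noteq> 0"
    using False by (simp flip: sin_ang_mult_dist)
  also have "\<dots> \<longleftrightarrow> 0 < sin (ang a b c)"
    using ang_bounds sin_ge_zero by (simp add: order_less_le)
  finally show ?thesis using False by simp
qed auto

lemma tri_angles_eq:
  assumes "\<not> collinear {a, b, c}"
  shows "tri_angles {a, b, c} = {ang b a c, ang a b c, ang a c b}"
proof -
  have d: "a \<noteq> b" "a \<noteq> c" "b \<noteq> c"
    using assms by (auto simp: insert_commute)
  show ?thesis
  proof
    show "tri_angles {a, b, c} \<subseteq> {ang b a c, ang a b c, ang a c b}"
    proof
      fix \<theta> assume "\<theta> \<in> tri_angles {a, b, c}"
      then obtain x y z where xyz: "{a, b, c} = {x, y, z}" "x \<noteq> y" "y \<noteq> z" "x \<noteq> z"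
        and \<theta>: "\<theta> = ang x y z"
        unfolding tri_angles_def by blast
      have "x \<in> {a, b, c}" "y \<in> {a, b, c}" "z \<in> {a, b, c}" using xyz(1) by blast+
      then show "\<theta> \<in> {ang b a c, ang a b c, ang a c b}"
        using xyz(2-4) unfolding \<theta>
        by (elim insertE emptyE)
          (simp_all add: ang_commute[of b a c] ang_commute[of a b c] ang_commute[of a c b])
    qed
    show "{ang b a c, ang a b c, ang a c b} \<subseteq> tri_angles {a, b, c}"
      unfolding tri_angles_def using d by (auto simp: insert_commute)
  qed
qed

lemma law_of_sines:
  assumes "a \<noteq> b"
  shows "sin (ang b a c) * dist a c = sin (ang a b c) * dist b c"
proof -
  have "sin (ang b a c) * dist a c * dist a b = sin (ang a b c) * dist b c * dist a b"
    using sin_ang_mult_dist[of b a c] sin_ang_mult_dist[of a b c] cross2_diff_base[of a b c]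
    by (simp add: dist_commute mult_ac)
  then show ?thesis using assms by simp
qed

lemma sin_ang_le_sin_ang_if_obtuse:
  assumes "(a - b) \<bullet> (c - b) \<le> 0" "a \<noteq> b" "c \<noteq> b"
  shows "sin (ang b a c) \<le> sin (ang a b c)"
proof -
  have "(dist a c)\<^sup>2 = (dist a b)\<^sup>2 + (dist b c)\<^sup>2 - 2 * ((a - b) \<bullet> (c - b))"
    unfolding dist_norm power2_norm_eq_inner by (simp add: algebra_simps inner_commute)
  then have "(dist b c)\<^sup>2 \<le> (dist a c)\<^sup>2"
    using assms(1) zero_le_power2[of "dist a b"] by linarith
  then have "dist b c \<le> dist a c" by (simp add: power2_le_iff_abs_le)
  then have "sin (ang b a c) * dist b c \<le> sin (ang b a c) * dist a c"
    using ang_bounds by (simp add: mult_left_mono sin_ge_zero)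
  also have "\<dots> = sin (ang a b c) * dist b c" by (rule law_of_sines[OF assms(2)])
  finally show ?thesis using assms(3) by simp
qed

lemma half_sin_ang_le_sin_ang:
  assumes "dist b a \<le> dist b c" "a \<noteq> b"
  shows "sin (ang a b c) / 2 \<le> sin (ang b a c)"
proof -
  have "0 < dist b a" using assms(2) by simp
  then have bc: "0 < dist b c" using assms(1) by linarith
  have "dist a c \<le> 2 * dist b c"
    using dist_triangle[of a c b] assms(1) by (simp add: dist_commute)
  then have "sin (ang b a c) * dist a c \<le> sin (ang b a c) * (2 * dist b c)"
    using ang_bounds by (simp add: mult_left_mono sin_ge_zero)
  then have "sin (ang a b c) * dist b c \<le> (2 * sin (ang b a c)) * dist b c"
    using law_of_sines[OF assms(2)] by (simp add: mult_ac)
  then show ?thesis using bc by simp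
qed

lemma sin_ang_scaleR:
  assumes "a' - b = k *\<^sub>R (a - b)" "c' - b = l *\<^sub>R (c - b)" "k \<noteq> 0" "l \<noteq> 0" "a \<noteq> b" "c \<noteq> b"
  shows "sin (ang a' b c') = sin (ang a b c)"
proof -
  have "sin (ang a' b c') * (\<bar>k * l\<bar> * (dist a b * dist c b)) = sin (ang a' b c') * (dist a' b * dist c' b)"
    using assms(1,2) by (simp add: dist_norm abs_mult mult_ac)
  also have "\<dots> = \<bar>k * l\<bar> * \<bar>cross2 (a - b) (c - b)\<bar>"
    unfolding sin_ang_mult_dist assms(1,2) by (simp add: cross2_def abs_mult[symmetric] algebra_simps)
  also have "\<dots> = sin (ang a b c) * (\<bar>k * l\<bar> * (dist a b * dist c b))"
    by (simp add: sin_ang_mult_dist[symmetric] mult_ac)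
  finally show ?thesis using assms(3-6) by simp
qed

lemma le_pi_minus_arcsin:
  assumes "0 \<le> \<theta>" "\<theta> \<le> pi" "-1 \<le> \<sigma>" "\<sigma> \<le> 1" "\<theta> \<le> pi / 2 \<or> \<sigma> \<le> sin \<theta>"
  shows "\<theta> \<le> pi - arcsin \<sigma>"
proof (cases "\<theta> \<le> pi / 2")
  case True
  then show ?thesis using arcsin_ubound[OF assms(3,4)] by linarith
next
  case False
  then have "arcsin \<sigma> \<le> pi - \<theta>"
    using assms by (subst arcsin_le_iff) auto
  then show ?thesis by linarith
qed

lemma Maxac_tri_if_sin_ang_ge:
  assumes "\<not> collinear {a, b, c}" "0 \<le> \<sigma>" "\<sigma> \<le> sin (ang b a c)"
  shows "Maxac_tri (pi - arcsin \<sigma>) {a, b, c}"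
proof -
  have d: "a \<noteq> b" "a \<noteq> c" "b \<noteq> c"
    using assms(1) by (auto simp: insert_commute)
  have \<sigma>1: "\<sigma> \<le> 1" using assms(3) sin_le_one order_trans by blast
  (* Only an obtuse angle can exceed pi/2, and its sine dominates that of the angle at a. *)
  have vertex: "ang x y z \<le> pi - arcsin \<sigma>"
    if "\<sigma> \<le> sin (ang y x z)" "x \<noteq> y" "z \<noteq> y" for x y z
  proof (rule le_pi_minus_arcsin)
    show "ang x y z \<le> pi / 2 \<or> \<sigma> \<le> sin (ang x y z)"
    proof (cases "0 \<le> (x - y) \<bullet> (z - y)")
      case True
      then show ?thesis using ang_le_pi2_if_inner_nonneg by blast
    next
      case False
      then show ?thesis using sin_ang_le_sin_ang_if_obtuse[of x y z] that by auto
    qed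
  qed (use ang_bounds assms(2) \<sigma>1 in auto)
  have "ang b a c \<le> pi - arcsin \<sigma>"
    using le_pi_minus_arcsin[OF ang_bounds] assms(2,3) \<sigma>1 by simp
  moreover have "ang a b c \<le> pi - arcsin \<sigma>" using vertex assms(3) d by simp
  moreover have "ang a c b \<le> pi - arcsin \<sigma>"
    by (rule vertex) (use assms(3) d in \<open>simp_all add: ang_commute[of c a b]\<close>)
  ultimately show ?thesis
    unfolding Maxac_tri_def tri_angles_eq[OF assms(1)] by simp
qed

lemma in_open_segmentE:
  assumes "x \<in> open_segment a b"
  obtains s where "0 < s" "s < 1" "x = a + s *\<^sub>R (b - a)"
proof -
  obtain s where "0 < s" "s < 1" "x = (1 - s) *\<^sub>R a + s *\<^sub>R b"
    using assms unfolding in_segment by blast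
  then show ?thesis using that by (simp add: algebra_simps)
qed

lemma sin_ang_closed_segment:
  assumes "b' \<in> closed_segment a b" "b' \<noteq> a" "c' \<in> closed_segment a c" "c' \<noteq> a" "b \<noteq> a" "c \<noteq> a"
  shows "sin (ang b' a c') = sin (ang b a c)"
proof -
  obtain s t where "b' = (1 - s) *\<^sub>R a + s *\<^sub>R b" "c' = (1 - t) *\<^sub>R a + t *\<^sub>R c"
    using assms(1,3) unfolding in_segment by blast
  then have "b' - a = s *\<^sub>R (b - a)" "c' - a = t *\<^sub>R (c - a)" "s \<noteq> 0" "t \<noteq> 0"
    using assms(2,4) by (auto simp: algebra_simps)
  then show ?thesis using assms(5,6) by (intro sin_ang_scaleR[where k = s and l = t])
qed

lemma Maxac_tri_subtriangle:
  assumes "\<not> collinear {a, b, c}" "0 \<le> \<sigma>" "\<sigma> \<le> sin (ang b a c)"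
    and "b' \<in> closed_segment a b" "b' \<noteq> a" "c' \<in> closed_segment a c" "c' \<noteq> a"
  shows "Maxac_tri (pi - arcsin \<sigma>) {a, b', c'}"
proof (rule Maxac_tri_if_sin_ang_ge)
  have abc: "b \<noteq> a" "c \<noteq> a" "0 < sin (ang b a c)"
    using assms(1) not_collinear_iff_sin_ang_pos[of b a c] by (simp_all add: insert_commute)
  then have "sin (ang b' a c') = sin (ang b a c)"
    using assms(4-7) by (intro sin_ang_closed_segment)
  then show "\<sigma> \<le> sin (ang b' a c')" "\<not> collinear {a, b', c'}"
    using assms(3,5,7) abc not_collinear_iff_sin_ang_pos[of b' a c'] by (simp_all add: insert_commute)
qed (fact assms(2))

lemma Maxac_tri_across_cut:
  assumes "\<not> collinear {a, b, c}" "0 \<le> \<sigma>" "\<sigma> \<le> sin (ang b a c)"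
    and "p \<in> open_segment a b" "q \<in> open_segment a c" "dist a p \<le> dist a q"
  shows "Maxac_tri (pi - arcsin (\<sigma> / 2)) {p, b, q}"
proof (rule Maxac_tri_if_sin_ang_ge)
  obtain s where s: "0 < s" "s < 1" "p = a + s *\<^sub>R (b - a)"
    using in_open_segmentE[OF assms(4)] .
  have abc: "b \<noteq> a" "c \<noteq> a" "0 < sin (ang b a c)"
    using assms(1) not_collinear_iff_sin_ang_pos[of b a c] by (simp_all add: insert_commute)
  have pq: "p \<noteq> a" "q \<noteq> a" "p \<in> closed_segment a b" "q \<in> closed_segment a c"
    using assms(4,5) by (auto simp: open_segment_def)
  have apq: "sin (ang p a q) = sin (ang b a c)"
    using pq abc by (intro sin_ang_closed_segment)
  then have "\<not> collinear {p, a, q}"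
    using pq abc not_collinear_iff_sin_ang_pos[of p a q] by simp
  then have "q \<noteq> p" by (auto simp: insert_commute)
  (* a p is the shorter side at a, and b p q is the supplement of the angle a p q. *)
  have half: "sin (ang p a q) / 2 \<le> sin (ang a p q)"
    using half_sin_ang_le_sin_ang assms(6) pq by blast
  have rays: "a - p = (- s) *\<^sub>R (b - a)" "b - p = (1 - s) *\<^sub>R (b - a)"
    unfolding s(3) by (simp_all add: algebra_simps)
  moreover have "(- (1 - s) / s) * (- s) = 1 - s" using s(1) by simp
  ultimately have "b - p = (- (1 - s) / s) *\<^sub>R (a - p)" by (simp only: scaleR_scaleR)
  moreover have "- (1 - s) / s \<noteq> 0" "a \<noteq> p" using s pq(1) by auto
  ultimately have bpq: "sin (ang b p q) = sin (ang a p q)"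
    using \<open>q \<noteq> p\<close> by (intro sin_ang_scaleR[where l = 1]) auto
  then show "\<sigma> / 2 \<le> sin (ang b p q)"
    using assms(3) half apq by linarith
  have "0 < sin (ang b p q)"
    using bpq half apq abc(3) by linarith
  moreover have "b \<noteq> p" using rays(2) s(2) abc(1) by auto
  ultimately show "\<not> collinear {p, b, q}"
    using \<open>q \<noteq> p\<close> not_collinear_iff_sin_ang_pos[of b p q] by (simp add: insert_commute)
qed (use assms(2) in simp)

lemma cut_diagonals_intersect:
  assumes "p \<in> open_segment a b" "q \<in> open_segment a c" "p \<noteq> c" "b \<noteq> q"
  shows "open_segment p c \<inter> open_segment b q \<noteq> {}"
proof -
  obtain s where s: "0 < s" "s < 1" "p = a + s *\<^sub>R (b - a)"
    using in_open_segmentE[OF assms(1)] .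
  obtain t where t: "0 < t" "t < 1" "q = a + t *\<^sub>R (c - a)"
    using in_open_segmentE[OF assms(2)] .
  (* The diagonals meet at (1 - mu) b + mu q = (1 - mu t) p + mu t c; comparing the
     coefficients of b - a determines mu. *)
  define \<mu> where "\<mu> = (1 - s) / (1 - s * t)"
  have "s * t < s" using s t by simp
  then have st: "s * t < 1" using s by linarith
  have \<mu>: "0 < \<mu>" "\<mu> < 1" "0 < \<mu> * t" "\<mu> * t < 1"
    using s t st by (auto simp: \<mu>_def field_simps intro: order_less_trans[OF mult_strict_left_mono[of t 1]])
  have k: "(1 - \<mu> * t) * s = 1 - \<mu>" using st by (simp add: \<mu>_def field_simps)
  have "(1 - \<mu> * t) *\<^sub>R p + (\<mu> * t) *\<^sub>R c
      = a + ((1 - \<mu> * t) * s) *\<^sub>R (b - a) + (\<mu> * t) *\<^sub>R (c - a)"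
    unfolding s(3) by (simp add: algebra_simps)
  also have "\<dots> = a + (1 - \<mu>) *\<^sub>R (b - a) + (\<mu> * t) *\<^sub>R (c - a)"
    unfolding k ..
  also have "\<dots> = (1 - \<mu>) *\<^sub>R b + \<mu> *\<^sub>R q"
    unfolding t(3) by (simp add: algebra_simps)
  finally have "(1 - \<mu>) *\<^sub>R b + \<mu> *\<^sub>R q \<in> open_segment p c"
    using \<mu> assms(3) unfolding in_segment by metis
  moreover have "(1 - \<mu>) *\<^sub>R b + \<mu> *\<^sub>R q \<in> open_segment b q"
    using \<mu> assms(4) unfolding in_segment by blast
  ultimately show ?thesis by blast
qed

lemma convex_quad_cut:
  assumes "\<not> collinear {a, b, c}" "p \<in> open_segment a b" "q \<in> open_segment a c"
  shows "convex_quad p b c q"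
proof -
  obtain s where s: "0 < s" "s < 1" "p = a + s *\<^sub>R (b - a)"
    using in_open_segmentE[OF assms(2)] .
  obtain t where t: "0 < t" "t < 1" "q = a + t *\<^sub>R (c - a)"
    using in_open_segmentE[OF assms(3)] .
  define D where "D = cross2 (b - a) (c - a)"
  have "D \<noteq> 0"
    using assms(1) collinear_iff_cross2_eq_0[of b a c] by (simp add: D_def insert_commute)
  moreover have "cross2 (p - b) (c - b) = - ((1 - s) * D)"
    "cross2 (b - c) (q - c) = - ((1 - t) * D)"
    "cross2 (c - q) (p - q) = - (s * (1 - t) * D)"
    "cross2 (q - p) (b - p) = - ((1 - s) * t * D)"
    unfolding s(3) t(3) D_def cross2_def by (simp_all add: algebra_simps)
  ultimately have "\<not> collinear {p, b, c}" "\<not> collinear {b, c, q}"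
    "\<not> collinear {c, q, p}" "\<not> collinear {q, p, b}"
    using s t by (simp_all add: collinear_iff_cross2_eq_0)
  moreover have "open_segment p c \<inter> open_segment b q \<noteq> {}"
    using assms(2,3) calculation by (intro cut_diagonals_intersect) (auto simp: insert_commute)
  ultimately show ?thesis
    unfolding convex_quad_def by (simp add: insert_commute)
qed

lemma sin_ang_mult_dist_le_dist:
  assumes "b \<noteq> c"
  shows "sin (ang a b c) * dist a b \<le> dist a c"
proof -
  have "sin (ang a b c) * dist a b = sin (ang b c a) * dist c a"
    using law_of_sines[OF assms, of a] by (simp add: ang_commute[of c b a] dist_commute)
  also have "\<dots> \<le> dist a c"
    using ang_bounds[of b c a] by (simp add: dist_commute mult_left_le_one_le sin_ge_zero)
  finally show ?thesis .
qed

lemma sin_ang_mult_dist_le_dist_segment: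
  assumes "p \<in> closed_segment a b" "a \<noteq> b"
  shows "sin (ang b a c) * dist a c \<le> dist p c"
proof -
  obtain s where P: "p = (1 - s) *\<^sub>R a + s *\<^sub>R b"
    using assms(1) unfolding in_segment by blast
  have "cross2 (b - a) (c - p) = cross2 (b - a) (c - a)"
    unfolding P by (simp add: cross2_def algebra_simps)
  then have "sin (ang b a c) * dist a c * dist a b \<le> dist p c * dist a b"
    using sin_ang_mult_dist[of b a c] abs_cross2_le[of "b - a" "c - p"]
    by (simp add: dist_norm norm_minus_commute mult_ac)
  then show ?thesis using assms(2) by simp
qed

lemma dist_ratio_cut:
  assumes "\<not> collinear {a, b, c}" "0 < \<sigma>" "\<sigma> \<le> sin (ang b a c)" "\<sigma> \<le> sin (ang a b c)"
    and "p \<in> open_segment a b" "q \<in> open_segment a c"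
  shows "dist b q / dist p c \<le> (1 + \<sigma>) / \<sigma>\<^sup>2"
proof -
  have d: "a \<noteq> b" "a \<noteq> c" "b \<noteq> c" using assms(1) by (auto simp: insert_commute)
  have pq: "p \<in> closed_segment a b" "q \<in> closed_segment a c"
    using assms(5,6) by (auto simp: open_segment_def)
  have "\<sigma> * dist a b \<le> sin (ang a b c) * dist a b"
    using assms(4) by (simp add: mult_right_mono)
  with sin_ang_mult_dist_le_dist[OF d(3), of a] have ab: "\<sigma> * dist a b \<le> dist a c"
    by linarith
  have "\<sigma> * dist a c \<le> sin (ang b a c) * dist a c"
    using assms(3) by (simp add: mult_right_mono)
  with sin_ang_mult_dist_le_dist_segment[OF pq(1) d(1), of c] have pc: "\<sigma> * dist a c \<le> dist p c"
    by linarith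
  have "\<sigma>\<^sup>2 * dist b q \<le> \<sigma>\<^sup>2 * (dist a b + dist a c)"
  proof (rule mult_left_mono)
    show "dist b q \<le> dist a b + dist a c"
      using dist_triangle[of b q a] dist_in_closed_segment[OF pq(2)] by (simp add: dist_commute)
  qed simp
  also have "\<dots> \<le> \<sigma> * dist a c + \<sigma>\<^sup>2 * dist a c"
    using mult_left_mono[OF ab, of \<sigma>] assms(2) by (simp add: power2_eq_square algebra_simps)
  also have "\<dots> = (1 + \<sigma>) * (\<sigma> * dist a c)" by (simp add: power2_eq_square algebra_simps)
  also have "\<dots> \<le> (1 + \<sigma>) * dist p c" using pc assms(2) by (simp add: mult_left_mono)
  finally have "dist b q \<le> (1 + \<sigma>) / \<sigma>\<^sup>2 * dist p c"
    using assms(2) by (simp add: field_simps)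
  moreover have "0 < \<sigma> * dist a c" using assms(2) d(2) by simp
  then have "0 < dist p c" using pc by linarith
  ultimately show ?thesis by (simp add: pos_divide_le_eq)
qed

lemma cut_triangle_Maxac_RDP:
  assumes "\<not> collinear {a, b, c}" "0 < \<sigma>"
    and "\<sigma> \<le> sin (ang b a c)" "\<sigma> \<le> sin (ang a b c)" "\<sigma> \<le> sin (ang a c b)"
    and "p \<in> open_segment a b" "q \<in> open_segment a c"
  shows "Maxac_tri (pi - arcsin (\<sigma> / 2)) {a, p, q}"
    and "RDP ((1 + \<sigma>) / \<sigma>\<^sup>2) (pi - arcsin (\<sigma> / 2)) p b c q"
proof -
  let ?\<psi> = "pi - arcsin (\<sigma> / 2)" and ?N = "(1 + \<sigma>) / \<sigma>\<^sup>2"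
  have acb: "\<not> collinear {a, c, b}" "\<sigma> \<le> sin (ang c a b)"
    using assms(1,3) by (simp_all add: insert_commute ang_commute[of c a b])
  have d: "p \<noteq> a" "q \<noteq> a" "p \<noteq> b" "q \<noteq> c" "b \<noteq> a" "c \<noteq> a" "c \<noteq> b"
    using assms(1,6,7) by (auto simp: open_segment_def insert_commute)
  have seg: "p \<in> closed_segment a b" "q \<in> closed_segment a c" "p \<in> closed_segment b a" "q \<in> closed_segment c a"
    using assms(6,7) by (auto simp: open_segment_def closed_segment_commute)
  show "Maxac_tri ?\<psi> {a, p, q}"
    using assms(2,3) seg d by (intro Maxac_tri_subtriangle[OF assms(1)]) auto
  have "Maxac_tri ?\<psi> {b, p, c}"
    using assms(1,2,4) seg d by (intro Maxac_tri_subtriangle) (auto simp: insert_commute)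
  moreover have "Maxac_tri ?\<psi> {c, q, b}"
    using assms(1,2,5) seg d by (intro Maxac_tri_subtriangle) (auto simp: insert_commute)
  moreover have "convex_quad p b c q" using assms(1,6,7) by (rule convex_quad_cut)
  moreover have "dist b q / dist p c \<le> ?N" "dist p c / dist b q \<le> ?N"
    using dist_ratio_cut[OF assms(1,2,3,4,6,7)] dist_ratio_cut[OF acb(1) assms(2) acb(2) assms(5,7,6)]
    by (simp_all add: dist_commute)
  moreover consider "dist a p \<le> dist a q" | "dist a q \<le> dist a p" by linarith
  then have "Maxac_tri ?\<psi> {b, q, p} \<or> Maxac_tri ?\<psi> {p, c, q}"
  proof cases
    case 1
    then have "Maxac_tri ?\<psi> {p, b, q}"
      using assms(2,3,6,7) by (intro Maxac_tri_across_cut[OF assms(1)]) auto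
    then show ?thesis by (simp add: insert_commute)
  next
    case 2
    then have "Maxac_tri ?\<psi> {q, c, p}"
      using assms(2,7,6) acb(2) by (intro Maxac_tri_across_cut[OF acb(1)]) auto
    then show ?thesis by (simp add: insert_commute)
  qed
  ultimately show "RDP ?N ?\<psi> p b c q"
    unfolding RDP_def by (auto simp: insert_commute)
qed

lemma sin_ang_ge_if_Minac_tri:
  assumes "Minac_tri \<alpha> {a, b, c}" "\<not> collinear {a, b, c}" "0 \<le> \<alpha>"
  shows "sin (min \<alpha> (pi / 2)) \<le> sin (ang b a c)"
proof -
  define \<beta> where "\<beta> = min \<alpha> (pi / 2)"
  have d: "a \<noteq> b" "a \<noteq> c" "b \<noteq> c" using assms(2) by (auto simp: insert_commute)
  have "\<alpha> \<le> ang b a c" "\<alpha> \<le> ang a b c"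
    using assms(1) unfolding Minac_tri_def tri_angles_eq[OF assms(2)] by simp_all
  then have \<beta>: "\<beta> \<le> ang b a c" "\<beta> \<le> ang a b c" by (auto simp: \<beta>_def)
  have "0 \<le> \<beta>" using assms(3) by (simp add: \<beta>_def)
  then have "- (pi / 2) \<le> \<beta>" using pi_gt_zero by linarith
  have acute: "sin \<beta> \<le> sin (ang y x z)" if "\<beta> \<le> ang y x z" "0 \<le> (y - x) \<bullet> (z - x)" for x y z
    using \<open>- (pi / 2) \<le> \<beta>\<close> that ang_le_pi2_if_inner_nonneg[of y x z] by (intro sin_monotone_2pi_le)
  show ?thesis
  proof (cases "0 \<le> (b - a) \<bullet> (c - a)")
    case True
    then show ?thesis using acute \<beta>(1) by (simp add: \<beta>_def)
  next
    case False
    have "(b - a) \<bullet> (c - a) + (a - b) \<bullet> (c - b) = (norm (b - a))\<^sup>2"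
      unfolding power2_norm_eq_inner by (simp add: algebra_simps inner_commute)
    then have "0 \<le> (a - b) \<bullet> (c - b)" using False zero_le_power2[of "norm (b - a)"] by linarith
    then have "sin \<beta> \<le> sin (ang a b c)" using acute \<beta>(2) by blast
    also have "\<dots> \<le> sin (ang b a c)"
      using False d by (intro sin_ang_le_sin_ang_if_obtuse) auto
    finally show ?thesis by (simp add: \<beta>_def)
  qed
qed

lemma fitted_mesh_cases:
  assumes "K \<in> fitted_mesh \<gamma> U"
  obtains a b c where "K = [a, b, c]" "{a, b, c} \<in> U"
  | a b c p q where "{a, b, c} \<in> U" "p \<in> open_segment a b" "q \<in> open_segment a c"
      "K = [a, p, q] \<or> K = [p, b, c, q]"
  using assms unfolding fitted_mesh_def by blast

lemma triangulation_Minac_sin_ang_ge: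
  assumes "triangulation \<Omega> U" "Minac_mesh \<alpha> U" "{a, b, c} \<in> U" "0 \<le> \<alpha>"
  shows "\<not> collinear {a, b, c}" "sin (min \<alpha> (pi / 2)) \<le> sin (ang b a c)"
    "sin (min \<alpha> (pi / 2)) \<le> sin (ang a b c)" "sin (min \<alpha> (pi / 2)) \<le> sin (ang a c b)"
proof -
  have nc: "\<not> collinear {a, b, c}" and Mi: "Minac_tri \<alpha> {a, b, c}"
    using assms(1-3) unfolding triangulation_def nondeg_tri_def Minac_mesh_def by blast+
  have sets: "{b, a, c} = {a, b, c}" "{c, a, b} = {a, b, c}" by blast+
  show "\<not> collinear {a, b, c}" by (fact nc)
  show "sin (min \<alpha> (pi / 2)) \<le> sin (ang b a c)"
    using sin_ang_ge_if_Minac_tri[OF Mi nc assms(4)] .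
  show "sin (min \<alpha> (pi / 2)) \<le> sin (ang a b c)"
    using sin_ang_ge_if_Minac_tri[of \<alpha> b a c, unfolded sets, OF Mi nc assms(4)] .
  show "sin (min \<alpha> (pi / 2)) \<le> sin (ang a c b)"
    using sin_ang_ge_if_Minac_tri[of \<alpha> c a b, unfolded sets, OF Mi nc assms(4)] .
qed

lemma fitted_mesh_Maxac_RDP:
  assumes "triangulation \<Omega> U" "Minac_mesh \<alpha> U" "0 < \<alpha>" "K \<in> fitted_mesh \<gamma> U"
  defines "\<sigma> \<equiv> sin (min \<alpha> (pi / 2))"
  shows "(\<forall>a b c. K = [a, b, c] \<longrightarrow> Maxac_tri (pi - arcsin (\<sigma> / 2)) {a, b, c}) \<and>
    (\<forall>a b c d. K = [a, b, c, d] \<longrightarrow> RDP ((1 + \<sigma>) / \<sigma>\<^sup>2) (pi - arcsin (\<sigma> / 2)) a b c d)"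
proof -
  have \<sigma>: "0 < \<sigma>"
    unfolding \<sigma>_def using assms(3) pi_gt_zero by (intro sin_gt_zero) (simp_all add: min_def)
  note tri = triangulation_Minac_sin_ang_ge[OF assms(1,2) _ less_imp_le[OF assms(3)], folded \<sigma>_def]
  from assms(4) show ?thesis
  proof (cases rule: fitted_mesh_cases)
    case (1 a b c)
    have "Maxac_tri (pi - arcsin (\<sigma> / 2)) {a, b, c}"
      using tri[OF 1(2)] \<sigma> by (intro Maxac_tri_if_sin_ang_ge) simp_all
    then show ?thesis using 1(1) by simp
  next
    case (2 a b c p q)
    note abc = tri[OF 2(1)]
    show ?thesis
      using 2(4) cut_triangle_Maxac_RDP[OF abc(1) \<sigma> abc(2-4) 2(2,3)] by auto
  qed
qed

theorem lemma4p4: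
  fixes \<alpha> :: real
  assumes "0 < \<alpha>"
  shows "\<exists>N \<psi>. 0 < \<psi> \<and> \<psi> < pi \<and>
    (\<forall>(\<Omega>::pt set) (\<gamma>::real \<Rightarrow> pt) U.
       convex_polygon \<Omega> \<and> C2_curve \<gamma> \<and> path_image \<gamma> \<subseteq> \<Omega> \<and>
       triangulation \<Omega> U \<and> Minac_mesh \<alpha> U \<and>
       (\<forall>V\<in>U. crossed \<gamma> V \<longrightarrow> cuts_two_edges \<gamma> V) \<longrightarrow>
       (\<forall>K\<in>fitted_mesh \<gamma> U.
          (\<forall>a b c. K = [a, b, c] \<longrightarrow> Maxac_tri \<psi> {a, b, c}) \<and>
          (\<forall>a b c d. K = [a, b, c, d] \<longrightarrow> RDP N \<psi> a b c d)))"
proof -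
  define \<sigma> where "\<sigma> = sin (min \<alpha> (pi / 2))"
  have \<sigma>: "0 < \<sigma>" "\<sigma> \<le> 1"
    unfolding \<sigma>_def using assms pi_gt_zero by (simp_all add: sin_gt_zero min_def)
  have "arcsin 0 < arcsin (\<sigma> / 2)" using \<sigma> by (intro arcsin_less_arcsin) auto
  moreover have "arcsin (\<sigma> / 2) \<le> pi / 2" using \<sigma> by (intro arcsin_ubound) auto
  ultimately have "0 < pi - arcsin (\<sigma> / 2)" "pi - arcsin (\<sigma> / 2) < pi"
    using pi_gt_zero by simp_all
  with fitted_mesh_Maxac_RDP[OF _ _ assms, folded \<sigma>_def] show ?thesis by blast
qed

end
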